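(* Let $\Sigma$ be a ranked alphabet, $B$ a strong bimonoid and $\mathcal{A}$ a $(\Sigma,B)$-wta. If the Nerode $(\Sigma,B)$-algebra $\mathcal{N}(\mathcal{A})$ is finite, then for the crisp-deterministic wta $\mathrm{rel}(\mathcal{N}(\mathcal{A}))$ we have $[\![\mathcal{A}]\!]^{\mathrm{init}}=[\![\mathrm{rel}(\mathcal{N}(\mathcal{A}))]\!]^{\mathrm{init}}$.
   Context: Ranked alphabet $\Sigma$ ($\Sigma^{(0)}\ne\emptyset$), trees $T_\Sigma$; strong bimonoid $(B,\oplus,\otimes,\mathbb{0},\mathbb{1})$ (commutative monoid $(B,\oplus,\mathbb{0})$, monoid $(B,\otimes,\mathbb{1})$, $\mathbb{0}\ne\mathbb{1}$, $\mathbb{0}$ absorbing, no distributivity). $(\Sigma,B)$-wta $\mathcal{A}=(Q,\delta,F)$: $Q$ finite nonempty, $\delta_k:Q^k\times\Sigma^{(k)}\times Q\to B$, $F:Q\to B$. Vector algebra $\mathrm{V}(\mathcal{A})=(B^Q,\delta_{\mathcal{A}})$, $\delta_{\mathcal{A}}(\sigma)(v_1,\dots,v_k)_q=\bigoplus_{q_1,\dots,q_k}\big(\bigotimes_{i=1}^k(v_i)_{q_i}\big)\otimes\delta_k(q_1\dots q_k,\sigma,q)$; $h_{\mathrm{V}(\mathcal{A})}$ the unique homomorphism $T_\Sigma\to B^Q$; $[\![\mathcal{A}]\!]^{\mathrm{init}}(\xi)=\bigoplus_q h_{\mathrm{V}(\mathcal{A})}(\xi)_q\otimes F_q$. $\mathcal{A}$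 is crisp-deterministic if for all $k,\sigma\in\Sigma^{(k)},q_1,\dots,q_k$ there is a unique $q$ with $\delta_k(q_1\dots q_k,\sigma,q)=\mathbb{1}$ and $\delta_k(q_1\dots q_k,\sigma,q')=\mathbb{0}$ for $q'\ne q$. Nerode algebra $\mathcal{N}(\mathcal{A})=(Q_{\mathcal{N}},\theta_{\mathcal{N}},F_{\mathcal{N}})$: $(Q_{\mathcal{N}},\theta_{\mathcal{N}})$ is the smallest subalgebra of $\mathrm{V}(\mathcal{A})$ (equivalently $Q_{\mathcal{N}}=\mathrm{im}(h_{\mathrm{V}(\mathcal{A})})$ with restricted operations) and $(F_{\mathcal{N}})_v=\bigoplus_{q\in Q}v_q\otimes F_q$. It is finite if $Q_{\mathcal{N}}$ is finite. For a finite $(\Sigma,B)$-algebra $\mathcal{K}=(P,\theta,G)$ ($\Sigma$-algebra $(P,\theta)$, $G:P\to B$), $\mathrm{rel}(\mathcal{K})$ is the crisp-deterministic wta $(P,\delta',G)$ with $\delta'_k(p_1\dots p_k,\sigma,p)=\mathbb{1}$ if $\theta(\sigma)(p_1,\dots,p_k)=p$ and $\mathbb{0}$ otherwise. *)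

theory Defs
  imports Main
begin

text \<open>Strong bimonoid: commutative monoid (+,0), monoid (*,1), 0 ~= 1, 0 absorbing
  for *; no distributivity is assumed.\<close>
class strong_bimonoid = comm_monoid_add + monoid_mult + mult_zero + zero_neq_one

datatype 'f rtree = Node 'f "'f rtree list"

fun wf_tree :: "'f set \<Rightarrow> ('f \<Rightarrow> nat) \<Rightarrow> 'f rtree \<Rightarrow> bool" where
  "wf_tree Sig rk (Node f ts) =
     (f \<in> Sig \<and> length ts = rk f \<and> list_all (wf_tree Sig rk) ts)"

definition trees :: "'f set \<Rightarrow> ('f \<Rightarrow> nat) \<Rightarrow> 'f rtree set" where
  "trees Sig rk = {t. wf_tree Sig rk t}"

text \<open>A wta is given by a finite nonempty state set Q, transition weights
  delta (qs, sigma, q) and final weights F. Vectors in B^Q are functions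
  'q => 'b (set to 0 outside Q).\<close>
definition vec_op :: "'q set \<Rightarrow> ('q list \<Rightarrow> 'f \<Rightarrow> 'q \<Rightarrow> 'b::strong_bimonoid)
    \<Rightarrow> 'f \<Rightarrow> ('q \<Rightarrow> 'b) list \<Rightarrow> 'q \<Rightarrow> 'b" where
  "vec_op Q \<delta> f vs q =
     (if q \<in> Q then
        (\<Sum>qs\<in>{qs. set qs \<subseteq> Q \<and> length qs = length vs}.
            prod_list (map2 (\<lambda>v p. v p) vs qs) * \<delta> qs f q)
      else 0)"

fun hV :: "'q set \<Rightarrow> ('q list \<Rightarrow> 'f \<Rightarrow> 'q \<Rightarrow> 'b::strong_bimonoid)
    \<Rightarrow> 'f rtree \<Rightarrow> 'q \<Rightarrow> 'b" where
  "hV Q \<delta> (Node f ts) = vec_op Q \<delta> f (map (hV Q \<delta>) ts)"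

definition wta_init :: "'q set \<Rightarrow> ('q list \<Rightarrow> 'f \<Rightarrow> 'q \<Rightarrow> 'b::strong_bimonoid)
    \<Rightarrow> ('q \<Rightarrow> 'b) \<Rightarrow> 'f rtree \<Rightarrow> 'b" where
  "wta_init Q \<delta> F \<xi> = (\<Sum>q\<in>Q. hV Q \<delta> \<xi> q * F q)"

text \<open>Nerode algebra of (Q, delta, F): carrier = image of hV on trees,
  operations = restriction of the vector algebra, final weights F_N.\<close>
definition nerode_states :: "'f set \<Rightarrow> ('f \<Rightarrow> nat) \<Rightarrow> 'q set
    \<Rightarrow> ('q list \<Rightarrow> 'f \<Rightarrow> 'q \<Rightarrow> 'b::strong_bimonoid) \<Rightarrow> ('q \<Rightarrow> 'b) set" where
  "nerode_states Sig rk Q \<delta> = hV Q \<delta> ` trees Sig rk"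

definition nerode_ops :: "'q set \<Rightarrow> ('q list \<Rightarrow> 'f \<Rightarrow> 'q \<Rightarrow> 'b::strong_bimonoid)
    \<Rightarrow> 'f \<Rightarrow> ('q \<Rightarrow> 'b) list \<Rightarrow> ('q \<Rightarrow> 'b)" where
  "nerode_ops Q \<delta> = vec_op Q \<delta>"

definition nerode_final :: "'q set \<Rightarrow> ('q \<Rightarrow> 'b::strong_bimonoid) \<Rightarrow> ('q \<Rightarrow> 'b) \<Rightarrow> 'b" where
  "nerode_final Q F v = (\<Sum>q\<in>Q. v q * F q)"

text \<open>rel(K) for a finite (Sigma,B)-algebra K = (P, theta, G): the crisp-deterministic
  wta (P, delta', G) with delta'(ps, sigma, p) = 1 iff theta sigma ps = p, else 0.\<close>
definition rel_delta :: "('f \<Rightarrow> 'p list \<Rightarrow> 'p) \<Rightarrow> 'p list \<Rightarrow> 'f \<Rightarrow> 'p \<Rightarrow> 'b::strong_bimonoid" where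
  "rel_delta \<theta> ps f p = (if \<theta> f ps = p then 1 else 0)"

end

theory Submission
  imports Defs
begin

text \<open>In the crisp-deterministic wta rel(K) each tree reaches, with weight 1, exactly the
  state h_K(t) of the algebra K and every other state with weight 0; hence rel(K) computes
  G(h_K(t)). For the Nerode algebra h_K is h_V(A) and G is F_N, and F_N(h_V(A)(t)) is by
  definition the initial algebra semantics of A.\<close>

fun alg_hom :: "('f \<Rightarrow> 'p list \<Rightarrow> 'p) \<Rightarrow> 'f rtree \<Rightarrow> 'p" where
  "alg_hom \<theta> (Node f ts) = \<theta> f (map (alg_hom \<theta>) ts)"

lemma alg_hom_vec_op: "alg_hom (vec_op Q \<delta>) = hV Q \<delta>"
proof
  fix t :: "'a rtree"
  show "alg_hom (vec_op Q \<delta>) t = hV Q \<delta> t"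
    by (induction t) (simp cong: map_cong)
qed

lemma prod_list_map2_indicators:
  assumes "length ps = length vs"
  shows "prod_list (map2 (\<lambda>v p. v p) (map (\<lambda>v p. if p = v then 1 else 0) vs) ps)
           = (if ps = vs then (1::'b::{monoid_mult, mult_zero}) else 0)"
  using assms
proof (induction vs arbitrary: ps)
  case Nil
  then show ?case by simp
next
  case (Cons v vs)
  then obtain p ps' where "ps = p # ps'" and "length ps' = length vs"
    by (cases ps) auto
  with Cons.IH show ?case by auto
qed

lemma hV_rel_delta:
  assumes "finite P"
    and reach: "\<And>t. wf_tree Sig rk t \<Longrightarrow> alg_hom \<theta> t \<in> P"
    and "wf_tree Sig rk \<xi>"
  shows "hV P (rel_delta \<theta>) \<xi> = (\<lambda>p. if p = alg_hom \<theta> \<xi> then 1 else (0::'b::strong_bimonoid))"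
  using \<open>wf_tree Sig rk \<xi>\<close>
proof (induction \<xi>)
  case (Node f ts)
  let ?d = "rel_delta \<theta> :: _ \<Rightarrow> _ \<Rightarrow> _ \<Rightarrow> 'b"
  let ?indicator = "\<lambda>v p. if p = v then 1 else (0::'b)"
  let ?vs = "map (alg_hom \<theta>) ts"
  let ?S = "{qs. set qs \<subseteq> P \<and> length qs = length ts}"
  have "alg_hom \<theta> (Node f ts) \<in> P"
    using reach Node.prems by blast
  have subtrees_wf: "wf_tree Sig rk t" if "t \<in> set ts" for t
    using Node.prems that by (simp add: list_all_iff)
  have IH: "map (hV P ?d) ts = map ?indicator ?vs"
    using Node.IH subtrees_wf by simp
  have "?vs \<in> ?S"
    using reach subtrees_wf by auto
  have "finite ?S"
    using finite_lists_length_eq[OF \<open>finite P\<close>] by simp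
  have sum_eq: "(\<Sum>qs\<in>?S. prod_list (map2 (\<lambda>v p. v p) (map ?indicator ?vs) qs) * ?d qs f p)
      = ?d ?vs f p" for p
  proof -
    have "(\<Sum>qs\<in>?S. prod_list (map2 (\<lambda>v p. v p) (map ?indicator ?vs) qs) * ?d qs f p)
        = (\<Sum>qs\<in>?S. if qs = ?vs then ?d ?vs f p else 0)"
      by (rule sum.cong) (simp_all add: prod_list_map2_indicators del: map_map)
    with \<open>?vs \<in> ?S\<close> \<open>finite ?S\<close> show ?thesis
      by (simp add: sum.delta')
  qed
  show ?case
  proof
    fix p
    have "hV P ?d (Node f ts) p = vec_op P ?d f (map ?indicator ?vs) p"
      by (simp only: hV.simps IH)
    also have "\<dots> = (if p \<in> P then ?d ?vs f p else 0)"
      by (simp add: vec_op_def sum_eq del: map_map)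
    also have "\<dots> = ?indicator (alg_hom \<theta> (Node f ts)) p"
      using \<open>alg_hom \<theta> (Node f ts) \<in> P\<close> by (auto simp: rel_delta_def)
    finally show "hV P ?d (Node f ts) p = ?indicator (alg_hom \<theta> (Node f ts)) p" .
  qed
qed

lemma wta_init_rel_delta:
  assumes "finite P"
    and "\<And>t. wf_tree Sig rk t \<Longrightarrow> alg_hom \<theta> t \<in> P"
    and "wf_tree Sig rk \<xi>"
  shows "wta_init P (rel_delta \<theta>) G \<xi> = (G (alg_hom \<theta> \<xi>) :: 'b::strong_bimonoid)"
proof -
  have "wta_init P (rel_delta \<theta>) G \<xi> = (\<Sum>p\<in>P. if p = alg_hom \<theta> \<xi> then G p else 0)"
    unfolding wta_init_def by (rule sum.cong) (simp_all add: hV_rel_delta[OF assms])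
  then show ?thesis
    using assms by (simp add: sum.delta')
qed

theorem theorem6p3:
  fixes Sig :: "'f set" and rk :: "'f \<Rightarrow> nat"
    and Q :: "'q set" and \<delta> :: "'q list \<Rightarrow> 'f \<Rightarrow> 'q \<Rightarrow> 'b::strong_bimonoid"
    and F :: "'q \<Rightarrow> 'b"
  assumes "finite Sig" and "\<exists>f\<in>Sig. rk f = 0"
    and "finite Q" and "Q \<noteq> {}"
    and "finite (nerode_states Sig rk Q \<delta>)"
  shows "\<forall>\<xi>\<in>trees Sig rk.
           wta_init Q \<delta> F \<xi> =
           wta_init (nerode_states Sig rk Q \<delta>) (rel_delta (nerode_ops Q \<delta>))
                    (nerode_final Q F) \<xi>"
proof
  fix \<xi> assume "\<xi> \<in> trees Sig rk"
  have reach: "alg_hom (nerode_ops Q \<delta>) t \<in> nerode_states Sig rk Q \<delta>" if "wf_tree Sig rk t" for t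
    using that by (simp add: nerode_ops_def alg_hom_vec_op nerode_states_def trees_def)
  have "wta_init (nerode_states Sig rk Q \<delta>) (rel_delta (nerode_ops Q \<delta>)) (nerode_final Q F) \<xi>
      = nerode_final Q F (hV Q \<delta> \<xi>)"
    using wta_init_rel_delta[OF assms(5) reach] \<open>\<xi> \<in> trees Sig rk\<close>
    by (simp add: trees_def nerode_ops_def alg_hom_vec_op)
  then show "wta_init Q \<delta> F \<xi> = wta_init (nerode_states Sig rk Q \<delta>)
      (rel_delta (nerode_ops Q \<delta>)) (nerode_final Q F) \<xi>"
    by (simp add: nerode_final_def wta_init_def)
qed

end
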